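(* Let $0<\beta<1$, let $B\subset\mathbf{C}^2$ be a ball around the origin with coordinates $(z_1,z_2)$, and let $\omega$ be a smooth Kähler metric on $B\setminus\{z_1=0\}$. Assume that $$\omega=\eta+i\partial\bar\partial\big(F|z_1|^{2\beta}\big),$$ where $\eta$ is a smooth real $(1,1)$-form on $B$ with $\eta(\partial/\partial z_2,\partial/\partial\bar z_2)>0$ along $\{z_1=0\}$, and $F$ is a smooth positive function on $B$. Then $\omega$ has standard cone singularities of angle $2\pi\beta$ along $\{z_1=0\}$ in a neighbourhood of the origin.
   Context: Standard cone singularities of angle $2\pi\beta$ along $\{z_1=0\}$ (Donaldson's sense): at each point $p$ of $\{z_1=0\}$, after a linear change of coordinates $\tilde z_1=az_1$, $\tilde z_2=bz_2$ with constants $a,b>0$ (centred at $p$), $\omega=\beta^2|\tilde z_1|^{2\beta-2}i\,d\tilde z_1\wedge d\bar{\tilde z}_1+i\,d\tilde z_2\wedge d\bar{\tilde z}_2+\sigma$, where $\sigma$ is a $(1,1)$-form whose components with respect to the coframe $\{v_i\wedge\bar v_j\}$, $v_1=|\tilde z_1|^{\beta-1}d\tilde z_1$, $v_2=d\tilde z_2$, are Hölder continuous and vanish at $p$. *)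

theory Defs
  imports "HOL-Analysis.Analysis"
begin

text \<open>Points of C^2 are vectors z :: complex^2 with coordinates z$1, z$2.
  Smoothness means C-infinity in the underlying real variables.\<close>

fun Ck_on :: "nat \<Rightarrow> 'a::real_normed_vector set \<Rightarrow> ('a \<Rightarrow> 'b::real_normed_vector) \<Rightarrow> bool" where
  "Ck_on 0 S f = continuous_on S f"
| "Ck_on (Suc k) S f = (f differentiable_on S \<and> continuous_on S f \<and>
      (\<forall>v. Ck_on k S (\<lambda>z. frechet_derivative f (at z) v)))"

definition smooth_on :: "'a::real_normed_vector set \<Rightarrow> ('a \<Rightarrow> 'b::real_normed_vector) \<Rightarrow> bool" where
  "smooth_on S f = (\<forall>k. Ck_on k S f)"

definition dz :: "2 \<Rightarrow> (complex^2 \<Rightarrow> complex) \<Rightarrow> complex^2 \<Rightarrow> complex" where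
  "dz j f z = (frechet_derivative f (at z) (axis j 1) - \<i> * frechet_derivative f (at z) (axis j \<i>)) / 2"

definition dzbar :: "2 \<Rightarrow> (complex^2 \<Rightarrow> complex) \<Rightarrow> complex^2 \<Rightarrow> complex" where
  "dzbar j f z = (frechet_derivative f (at z) (axis j 1) + \<i> * frechet_derivative f (at z) (axis j \<i>)) / 2"

text \<open>A real (1,1)-form \<omega> = i \<Sum>_{j,k} H_{jk} dz_j \<and> d(conj z_k) on C^2 is represented by its
  coefficient matrix field H.\<close>
definition ddbar_coeff :: "(complex^2 \<Rightarrow> complex) \<Rightarrow> complex^2 \<Rightarrow> complex^2^2" where
  "ddbar_coeff u z = (\<chi> j k. dz j (dzbar k u) z)"

definition smooth_real_11_form_on :: "(complex^2) set \<Rightarrow> (complex^2 \<Rightarrow> complex^2^2) \<Rightarrow> bool" where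
  "smooth_real_11_form_on S H =
     ((\<forall>j k. smooth_on S (\<lambda>z. H z $ j $ k)) \<and>
      (\<forall>z\<in>S. \<forall>j k. H z $ k $ j = cnj (H z $ j $ k)))"

text \<open>Smooth Kaehler metric: smooth real (1,1)-form, positive definite and closed (d\<omega> = 0).\<close>
definition smooth_kaehler_on :: "(complex^2) set \<Rightarrow> (complex^2 \<Rightarrow> complex^2^2) \<Rightarrow> bool" where
  "smooth_kaehler_on S H =
     (smooth_real_11_form_on S H \<and>
      (\<forall>z\<in>S. \<forall>v::complex^2. v \<noteq> 0 \<longrightarrow> Re (\<Sum>j\<in>UNIV. \<Sum>k\<in>UNIV. H z $ j $ k * v $ j * cnj (v $ k)) > 0) \<and>
      (\<forall>z\<in>S. \<forall>j k l. dz l (\<lambda>w. H w $ j $ k) z = dz j (\<lambda>w. H w $ l $ k) z \<and>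
                       dzbar l (\<lambda>w. H w $ j $ k) z = dzbar k (\<lambda>w. H w $ j $ l) z))"

text \<open>Standard cone singularity at a point p with p$1 = 0.  With \<tilde>z_1 = a z_1,
  \<tilde>z_2 = b (z_2 - p$2) (a, b > 0), the coefficients of \<omega> in the \<tilde>z coordinates are
  H_{jk} / (c_j c_k) with c_1 = a, c_2 = b.  The model metric has coefficients
  diag(\<beta>^2 |\<tilde>z_1|^(2\<beta>-2), 1), and the coefficients of \<sigma> = \<omega> - model with respect to
  i v_j \<and> conj v_k, v_1 = |\<tilde>z_1|^(\<beta>-1) d\<tilde>z_1, v_2 = d\<tilde>z_2, are
  (H_{jk}/(c_j c_k) - model_{jk}) w_j w_k with w_1 = |\<tilde>z_1|^(1-\<beta>), w_2 = 1.\<close>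
definition cone_sigma_coeff ::
  "real \<Rightarrow> real \<Rightarrow> real \<Rightarrow> (complex^2 \<Rightarrow> complex^2^2) \<Rightarrow> 2 \<Rightarrow> 2 \<Rightarrow> complex^2 \<Rightarrow> complex" where
  "cone_sigma_coeff \<beta> a b H j k x =
     (let c = (\<lambda>i::2. if i = 1 then a else b);
          r = a * cmod (x $ 1);
          w = (\<lambda>i::2. if i = 1 then r powr (1 - \<beta>) else 1);
          m = (\<lambda>i i'::2. if i = i' then (if i = 1 then \<beta>^2 * r powr (2*\<beta> - 2) else 1) else 0)
      in (H x $ j $ k / complex_of_real (c j * c k) - complex_of_real (m j k))
           * complex_of_real (w j * w k))"

definition standard_cone_at :: "real \<Rightarrow> (complex^2 \<Rightarrow> complex^2^2) \<Rightarrow> complex^2 \<Rightarrow> bool" where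
  "standard_cone_at \<beta> H p =
     (\<exists>a b. a > 0 \<and> b > 0 \<and>
       (\<exists>r>0. \<exists>\<alpha> C. 0 < \<alpha> \<and> \<alpha> < 1 \<and>
          (\<forall>j k. (\<forall>x\<in>ball p r - {z. z $ 1 = 0}. \<forall>y\<in>ball p r - {z. z $ 1 = 0}.
                     cmod (cone_sigma_coeff \<beta> a b H j k x - cone_sigma_coeff \<beta> a b H j k y)
                       \<le> C * dist x y powr \<alpha>) \<and>
                 (cone_sigma_coeff \<beta> a b H j k \<longlongrightarrow> 0) (at p within (ball p r - {z. z $ 1 = 0})))))"

definition standard_cone_near :: "real \<Rightarrow> (complex^2 \<Rightarrow> complex^2^2) \<Rightarrow> complex^2 \<Rightarrow> bool" where
  "standard_cone_near \<beta> H q =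
     (\<exists>U. open U \<and> q \<in> U \<and> (\<forall>p\<in>U. p $ 1 = 0 \<longrightarrow> standard_cone_at \<beta> H p))"

end

theory Submission
  imports Defs
begin

text \<open>
  Off the divisor \<open>z\<^sub>1 = 0\<close> the product rule splits \<open>ddbar (F |z\<^sub>1|^(2\<beta>))\<close> into
  \<open>F ddbar |z\<^sub>1|^(2\<beta>)\<close>, whose only entry is \<open>\<beta>\<^sup>2 |z\<^sub>1|^(2\<beta>-2)\<close> in the \<open>(1,1)\<close> slot,
  first-order cross terms, and \<open>|z\<^sub>1|^(2\<beta>) ddbar F\<close>. Passing to the coframe
  \<open>v\<^sub>1 = |z\<^sub>1|^(\<beta>-1) dz\<^sub>1\<close> multiplies each index \<open>1\<close> by the weight \<open>|z\<^sub>1|^(1-\<beta>)\<close>.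
  Afterwards every coefficient is a sum of smooth functions times \<open>|z\<^sub>1|^\<gamma>\<close> (\<open>0 < \<gamma> \<le> 1\<close>),
  \<open>z\<^sub>1\<close>, \<open>cnj z\<^sub>1\<close> or \<open>|z\<^sub>1|^(\<beta>-1) z\<^sub>1\<close>. All of these are Hoelder of exponent
  \<open>min \<beta> (1 - \<beta>)\<close>, so the weighted coefficients extend Hoelder-continuously across the
  divisor. At a divisor point \<open>p\<close> the weighted matrix is \<open>diag (\<beta>\<^sup>2 F p) (\<eta>\<^sub>2\<^sub>2 p)\<close>, and
  the rescaling \<open>a^(2\<beta>) = F p\<close>, \<open>b\<^sup>2 = \<eta>\<^sub>2\<^sub>2 p\<close> turns it into the model
  \<open>diag \<beta>\<^sup>2 1\<close>. Hence \<open>\<sigma>\<close> is Hoelder near \<open>p\<close> and vanishes at \<open>p\<close>.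
\<close>

section \<open>Hoelder functions\<close>

definition bounded_holder_on :: "real \<Rightarrow> 'a::metric_space set \<Rightarrow> ('a \<Rightarrow> 'b::real_normed_vector) \<Rightarrow> bool"
  where "bounded_holder_on \<alpha> S f \<longleftrightarrow>
    bounded (f ` S) \<and> (\<exists>C. \<forall>x\<in>S. \<forall>y\<in>S. norm (f x - f y) \<le> C * dist x y powr \<alpha>)"

lemma bounded_holder_onI:
  assumes "\<And>x. x \<in> S \<Longrightarrow> norm (f x) \<le> B"
    and "\<And>x y. x \<in> S \<Longrightarrow> y \<in> S \<Longrightarrow> norm (f x - f y) \<le> C * dist x y powr \<alpha>"
  shows "bounded_holder_on \<alpha> S f"
  unfolding bounded_holder_on_def bounded_iff using assms by blast

lemma bounded_holder_onE:
  assumes "bounded_holder_on \<alpha> S f"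
  obtains B C where "0 \<le> C" "\<And>x. x \<in> S \<Longrightarrow> norm (f x) \<le> B"
    and "\<And>x y. x \<in> S \<Longrightarrow> y \<in> S \<Longrightarrow> norm (f x - f y) \<le> C * dist x y powr \<alpha>"
proof -
  obtain B C where B: "\<forall>x\<in>S. norm (f x) \<le> B"
    and C: "\<forall>x\<in>S. \<forall>y\<in>S. norm (f x - f y) \<le> C * dist x y powr \<alpha>"
    using assms unfolding bounded_holder_on_def bounded_iff by blast
  have "norm (f x - f y) \<le> max C 0 * dist x y powr \<alpha>" if "x \<in> S" "y \<in> S" for x y
    using C that by (meson max.cobounded1 mult_right_mono order_trans powr_ge_zero)
  with B show ?thesis
    using that[of "max C 0" B] by simp
qed

lemma bounded_holder_on_const: "bounded_holder_on \<alpha> S (\<lambda>x. c)"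
  by (rule bounded_holder_onI[where B = "norm c" and C = 0]) simp_all

lemma bounded_holder_on_add:
  assumes "bounded_holder_on \<alpha> S f" "bounded_holder_on \<alpha> S g"
  shows "bounded_holder_on \<alpha> S (\<lambda>x. f x + g x)"
proof -
  obtain Bf Cf where Bf: "\<And>x. x \<in> S \<Longrightarrow> norm (f x) \<le> Bf"
    and Cf: "\<And>x y. x \<in> S \<Longrightarrow> y \<in> S \<Longrightarrow> norm (f x - f y) \<le> Cf * dist x y powr \<alpha>"
    using assms(1) by (elim bounded_holder_onE) blast
  obtain Bg Cg where Bg: "\<And>x. x \<in> S \<Longrightarrow> norm (g x) \<le> Bg"
    and Cg: "\<And>x y. x \<in> S \<Longrightarrow> y \<in> S \<Longrightarrow> norm (g x - g y) \<le> Cg * dist x y powr \<alpha>"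
    using assms(2) by (elim bounded_holder_onE) blast
  show ?thesis
  proof (rule bounded_holder_onI)
    show "norm (f x + g x) \<le> Bf + Bg" if "x \<in> S" for x
      using Bf[OF that] Bg[OF that] norm_triangle_le by (metis add_mono)
    show "norm ((f x + g x) - (f y + g y)) \<le> (Cf + Cg) * dist x y powr \<alpha>"
      if "x \<in> S" "y \<in> S" for x y
      using Cf[OF that] Cg[OF that] norm_triangle_ineq[of "f x - f y" "g x - g y"]
      by (simp add: algebra_simps)
  qed
qed

lemma bounded_holder_on_minus:
  "bounded_holder_on \<alpha> S f \<Longrightarrow> bounded_holder_on \<alpha> S (\<lambda>x. - f x)"
  unfolding bounded_holder_on_def bounded_iff by (simp add: norm_minus_commute)

lemma bounded_holder_on_diff:
  "bounded_holder_on \<alpha> S f \<Longrightarrow> bounded_holder_on \<alpha> S g \<Longrightarrow> bounded_holder_on \<alpha> S (\<lambda>x. f x - g x)"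
  using bounded_holder_on_add[OF _ bounded_holder_on_minus] by fastforce

lemma bounded_holder_on_mult:
  fixes f g :: "'a::metric_space \<Rightarrow> 'b::real_normed_algebra"
  assumes "bounded_holder_on \<alpha> S f" "bounded_holder_on \<alpha> S g"
  shows "bounded_holder_on \<alpha> S (\<lambda>x. f x * g x)"
proof -
  obtain Bf Cf where Bf: "\<And>x. x \<in> S \<Longrightarrow> norm (f x) \<le> Bf"
    and Cf: "\<And>x y. x \<in> S \<Longrightarrow> y \<in> S \<Longrightarrow> norm (f x - f y) \<le> Cf * dist x y powr \<alpha>"
    using assms(1) by (elim bounded_holder_onE) blast
  obtain Bg Cg where Bg: "\<And>x. x \<in> S \<Longrightarrow> norm (g x) \<le> Bg"
    and Cg: "\<And>x y. x \<in> S \<Longrightarrow> y \<in> S \<Longrightarrow> norm (g x - g y) \<le> Cg * dist x y powr \<alpha>"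
    using assms(2) by (elim bounded_holder_onE) blast
  show ?thesis
  proof (rule bounded_holder_onI)
    show "norm (f x * g x) \<le> Bf * Bg" if "x \<in> S" for x
      using Bf[OF that] Bg[OF that] norm_mult_ineq[of "f x" "g x"]
      by (meson mult_mono norm_ge_zero order_trans)
    show "norm (f x * g x - f y * g y) \<le> (Bf * Cg + Bg * Cf) * dist x y powr \<alpha>"
      if xy: "x \<in> S" "y \<in> S" for x y
    proof -
      have "norm (f x * g x - f y * g y) = norm (f x * (g x - g y) + (f x - f y) * g y)"
        by (simp add: algebra_simps)
      also have "\<dots> \<le> norm (f x * (g x - g y)) + norm ((f x - f y) * g y)"
        by (rule norm_triangle_ineq)
      also have "\<dots> \<le> norm (f x) * norm (g x - g y) + norm (f x - f y) * norm (g y)"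
        by (intro add_mono norm_mult_ineq)
      also have "\<dots> \<le> Bf * (Cg * dist x y powr \<alpha>) + (Cf * dist x y powr \<alpha>) * Bg"
        using Bf[OF xy(1)] Bg[OF xy(2)] Cf[OF xy] Cg[OF xy]
        by (intro add_mono mult_mono) (auto intro: order_trans[OF norm_ge_zero])
      finally show ?thesis
        by (simp add: algebra_simps)
    qed
  qed
qed

lemma bounded_holder_on_divide_const:
  fixes f :: "'a::metric_space \<Rightarrow> 'b::real_normed_field"
  shows "bounded_holder_on \<alpha> S f \<Longrightarrow> bounded_holder_on \<alpha> S (\<lambda>x. f x / c)"
  using bounded_holder_on_mult[OF _ bounded_holder_on_const, of \<alpha> S f "inverse c"]
  by (simp add: divide_inverse)

lemma holder_estimate_mono_exponent:
  assumes "bounded S" "\<alpha> \<le> \<gamma>"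
    and C: "\<And>x y. x \<in> S \<Longrightarrow> y \<in> S \<Longrightarrow> norm (f x - f y) \<le> C * dist x y powr \<gamma>"
  shows "\<exists>C'. \<forall>x\<in>S. \<forall>y\<in>S. norm (f x - f y) \<le> C' * dist x y powr \<alpha>"
proof -
  define D where "D = diameter S"
  have "norm (f x - f y) \<le> max C 0 * D powr (\<gamma> - \<alpha>) * dist x y powr \<alpha>" if "x \<in> S" "y \<in> S" for x y
  proof -
    have "dist x y powr \<gamma> \<le> D powr (\<gamma> - \<alpha>) * dist x y powr \<alpha>"
    proof (cases "x = y")
      case False
      then have "dist x y powr \<gamma> = dist x y powr (\<gamma> - \<alpha>) * dist x y powr \<alpha>"
        by (simp add: powr_add[symmetric])
      also have "\<dots> \<le> D powr (\<gamma> - \<alpha>) * dist x y powr \<alpha>"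
        using diameter_bounded_bound[OF assms(1) that] assms(2) unfolding D_def
        by (intro mult_right_mono powr_mono2) auto
      finally show ?thesis .
    qed simp
    then have "max C 0 * dist x y powr \<gamma> \<le> max C 0 * D powr (\<gamma> - \<alpha>) * dist x y powr \<alpha>"
      by (simp add: mult.assoc mult_left_mono)
    moreover have "C * dist x y powr \<gamma> \<le> max C 0 * dist x y powr \<gamma>"
      by (simp add: mult_right_mono)
    ultimately show ?thesis
      using C[OF that] by linarith
  qed
  then show ?thesis
    by blast
qed

lemma holder_estimate_imp_bounded:
  assumes "bounded S" "0 < \<alpha>"
    and C: "\<And>x y. x \<in> S \<Longrightarrow> y \<in> S \<Longrightarrow> norm (f x - f y) \<le> C * dist x y powr \<alpha>"
  shows "bounded (f ` S)"
proof (cases "S = {}")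
  case False
  then obtain x0 where x0: "x0 \<in> S"
    by blast
  have "norm (f x) \<le> norm (f x0) + \<bar>C\<bar> * diameter S powr \<alpha>" if "x \<in> S" for x
  proof -
    have "dist x x0 powr \<alpha> \<le> diameter S powr \<alpha>"
      using diameter_bounded_bound[OF assms(1) that x0] assms(2) by (intro powr_mono2) auto
    then have "C * dist x x0 powr \<alpha> \<le> \<bar>C\<bar> * diameter S powr \<alpha>"
      by (meson abs_ge_self abs_ge_zero mult_mono order_trans powr_ge_zero)
    then show ?thesis
      using C[OF that x0] norm_triangle_sub[of "f x" "f x0"] by simp
  qed
  then show ?thesis
    unfolding bounded_iff by blast
qed simp

lemma holder_estimate_imp_bounded_holder_on:
  assumes "bounded S" "0 < \<alpha>" "\<alpha> \<le> \<gamma>"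
    and "\<And>x y. x \<in> S \<Longrightarrow> y \<in> S \<Longrightarrow> norm (f x - f y) \<le> C * dist x y powr \<gamma>"
  shows "bounded_holder_on \<alpha> S f"
proof -
  obtain C' where "\<And>x y. x \<in> S \<Longrightarrow> y \<in> S \<Longrightarrow> norm (f x - f y) \<le> C' * dist x y powr \<alpha>"
    using holder_estimate_mono_exponent[OF assms(1,3,4)] by blast
  with holder_estimate_imp_bounded[OF assms(1,2)] show ?thesis
    unfolding bounded_holder_on_def by blast
qed

lemma lipschitz_on_imp_bounded_holder_on:
  assumes "bounded S" "0 < \<alpha>" "\<alpha> \<le> 1" "L-lipschitz_on S f"
  shows "bounded_holder_on \<alpha> S f"
  by (rule holder_estimate_imp_bounded_holder_on[OF assms(1-3), where C = L])
    (use lipschitz_onD[OF assms(4)] in \<open>simp add: dist_norm\<close>)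

lemma bounded_holder_on_tendsto:
  assumes "bounded_holder_on \<alpha> S f" "0 < \<alpha>" "p \<in> S"
  shows "(f \<longlongrightarrow> f p) (at p within S)"
proof -
  obtain C where C: "\<And>x y. x \<in> S \<Longrightarrow> y \<in> S \<Longrightarrow> norm (f x - f y) \<le> C * dist x y powr \<alpha>"
    using assms(1) unfolding bounded_holder_on_def by blast
  have "\<forall>\<^sub>F x in at p within S. norm (f x - f p) \<le> C * dist x p powr \<alpha>"
    using C assms(3) by (auto simp: eventually_at_filter)
  moreover have "((\<lambda>x. dist x p) \<longlongrightarrow> 0) (at p within S)"
    by (intro tendsto_eq_intros) auto
  then have "((\<lambda>x. dist x p powr \<alpha>) \<longlongrightarrow> 0) (at p within S)"
    using assms(2) by (intro tendsto_zero_powrI) auto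
  then have "((\<lambda>x. C * dist x p powr \<alpha>) \<longlongrightarrow> 0) (at p within S)"
    by (rule tendsto_mult_right_zero)
  ultimately have "((\<lambda>x. f x - f p) \<longlongrightarrow> 0) (at p within S)"
    by (rule Lim_null_comparison)
  then show ?thesis
    by (simp add: LIM_zero_iff)
qed

lemma bounded_holder_on_uniform_constant:
  fixes E :: "'i::finite \<Rightarrow> 'a::metric_space \<Rightarrow> 'b::real_normed_vector"
  assumes "\<And>i. bounded_holder_on \<alpha> S (E i)"
  obtains C where "\<And>i x y. x \<in> S \<Longrightarrow> y \<in> S \<Longrightarrow> norm (E i x - E i y) \<le> C * dist x y powr \<alpha>"
proof -
  have "\<exists>C\<ge>0. \<forall>x\<in>S. \<forall>y\<in>S. norm (E i x - E i y) \<le> C * dist x y powr \<alpha>" for i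
    using assms[of i] by (elim bounded_holder_onE) blast
  then obtain C where C0: "\<And>i. 0 \<le> C i"
    and C: "\<And>i x y. x \<in> S \<Longrightarrow> y \<in> S \<Longrightarrow> norm (E i x - E i y) \<le> C i * dist x y powr \<alpha>"
    by metis
  have "norm (E i x - E i y) \<le> (\<Sum>i\<in>UNIV. C i) * dist x y powr \<alpha>" if "x \<in> S" "y \<in> S" for i x y
  proof -
    have "C i \<le> (\<Sum>i\<in>UNIV. C i)"
      by (rule member_le_sum) (use C0 in auto)
    then show ?thesis
      using C[OF that, of i] by (meson mult_right_mono order_trans powr_ge_zero)
  qed
  then show ?thesis
    using that by blast
qed

lemma bounded_holder_on_if_const:
  "(P \<Longrightarrow> bounded_holder_on \<alpha> S f) \<Longrightarrow> (\<not> P \<Longrightarrow> bounded_holder_on \<alpha> S g)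
    \<Longrightarrow> bounded_holder_on \<alpha> S (\<lambda>x. if P then f x else g x)"
  by (cases P) simp_all

lemma bounded_holder_on_cnj:
  "bounded_holder_on \<alpha> S f \<Longrightarrow> bounded_holder_on \<alpha> S (\<lambda>x. cnj (f x))"
  unfolding bounded_holder_on_def bounded_iff
  by (simp flip: complex_cnj_diff)

lemma powr_add_le:
  fixes s t g :: real
  assumes "0 \<le> s" "0 \<le> t" "0 < g" "g \<le> 1"
  shows "(s + t) powr g \<le> s powr g + t powr g"
proof (cases "s + t = 0")
  case False
  then have st: "0 < s + t"
    using assms by simp
  have "s / (s + t) \<le> (s / (s + t)) powr g" "t / (s + t) \<le> (t / (s + t)) powr g"
    using assms st powr_mono'[of g 1] by auto
  have "(s + t) powr g = (s + t) powr g * (s / (s + t) + t / (s + t))"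
    using st by (simp add: add_divide_distrib[symmetric])
  also have "\<dots> \<le> (s + t) powr g * ((s / (s + t)) powr g + (t / (s + t)) powr g)"
    by (intro mult_left_mono add_mono) (fact+, simp)
  also have "\<dots> = s powr g + t powr g"
    using st assms by (simp add: powr_divide distrib_left)
  finally show ?thesis .
qed (use assms in simp)

lemma abs_powr_diff_le:
  fixes s t g :: real
  assumes "0 \<le> s" "0 \<le> t" "0 < g" "g \<le> 1"
  shows "\<bar>s powr g - t powr g\<bar> \<le> \<bar>s - t\<bar> powr g"
proof -
  have "\<bar>y powr g - x powr g\<bar> \<le> \<bar>y - x\<bar> powr g" if "0 \<le> x" "x \<le> y" for x y :: real
  proof -
    have "x powr g \<le> y powr g"
      using that assms(3) by (intro powr_mono2) auto
    then show ?thesis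
      using powr_add_le[of x "y - x" g] that assms(3,4) by simp
  qed
  from this[of t s] this[of s t] show ?thesis
    using assms(1,2) by (cases "t \<le> s") (simp_all add: abs_minus_commute)
qed

lemma mult_powr_le_of_le_double:
  fixes d W \<beta> :: real
  assumes "0 < \<beta>" "\<beta> < 1" "0 \<le> d" "d \<le> 2 * W"
  shows "d * W powr (\<beta> - 1) \<le> 2 * d powr \<beta>"
proof (cases "d = 0")
  case False
  then have "0 < d"
    using assms(3) by simp
  have "W powr (\<beta> - 1) \<le> (d / 2) powr (\<beta> - 1)"
    using \<open>0 < d\<close> assms by (intro powr_mono2') auto
  also have "\<dots> = 2 powr (1 - \<beta>) * d powr (\<beta> - 1)"
    using \<open>0 < d\<close> by (simp add: powr_divide powr_diff)
  also have "\<dots> \<le> 2 * d powr (\<beta> - 1)"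
    using assms by (intro mult_right_mono) (use powr_mono[of "1 - \<beta>" 1 2] in auto)
  finally have "d * W powr (\<beta> - 1) \<le> d * (2 * d powr (\<beta> - 1))"
    using \<open>0 < d\<close> by (simp add: mult_left_mono)
  also have "\<dots> = 2 * d powr \<beta>"
    using powr_mult_base[of d "\<beta> - 1"] \<open>0 < d\<close> by simp
  finally show ?thesis .
qed simp

lemma norm_scaleR_powr_diff_le_ordered:
  fixes w v :: "'a::real_normed_vector"
  assumes "0 < \<beta>" "\<beta> < 1" "norm v \<le> norm w" "v \<noteq> 0"
  shows "norm (norm w powr (\<beta> - 1) *\<^sub>R w - norm v powr (\<beta> - 1) *\<^sub>R v) \<le> 4 * norm (w - v) powr \<beta>"
proof -
  define V W d where "V = norm v" and "W = norm w" and "d = norm (w - v)"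
  have V: "0 < V" and W: "0 < W" and VW: "V \<le> W"
    using assms(3,4) unfolding V_def W_def by auto
  have "W - V \<le> d" and "d \<le> 2 * W"
    using norm_triangle_ineq2[of w v] norm_triangle_ineq4[of w v] VW
    unfolding V_def W_def d_def by auto
  have VW_powr: "W powr (\<beta> - 1) \<le> V powr (\<beta> - 1)"
    using VW assms V by (intro powr_mono2') auto
  have "norm (W powr (\<beta> - 1) *\<^sub>R w - V powr (\<beta> - 1) *\<^sub>R v)
      \<le> norm (W powr (\<beta> - 1) *\<^sub>R (w - v)) + norm ((W powr (\<beta> - 1) - V powr (\<beta> - 1)) *\<^sub>R v)"
    by (rule order_trans[OF _ norm_triangle_ineq]) (simp add: algebra_simps)
  also have "\<dots> = d * W powr (\<beta> - 1) + (V powr (\<beta> - 1) - W powr (\<beta> - 1)) * V"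
    using VW_powr by (simp add: d_def V_def)
  also have "\<dots> = d * W powr (\<beta> - 1) + (V powr \<beta> - V * W powr (\<beta> - 1))"
    using powr_mult_base[of V "\<beta> - 1"] V by (simp add: algebra_simps)
  also have "\<dots> \<le> d * W powr (\<beta> - 1) + (W - V) * W powr (\<beta> - 1)"
    using powr_mono2[of \<beta> V W] VW assms V W by (simp add: left_diff_distrib powr_mult_base)
  also have "\<dots> \<le> 2 * (d * W powr (\<beta> - 1))"
    using \<open>W - V \<le> d\<close> by (simp add: mult_right_mono)
  also have "\<dots> \<le> 4 * d powr \<beta>"
    using mult_powr_le_of_le_double[OF assms(1,2) _ \<open>d \<le> 2 * W\<close>] by (simp add: d_def)
  finally show ?thesis
    unfolding V_def W_def d_def .
qed

lemma norm_scaleR_powr_diff_le: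
  fixes w v :: "'a::real_normed_vector"
  assumes "0 < \<beta>" "\<beta> < 1"
  shows "norm (norm w powr (\<beta> - 1) *\<^sub>R w - norm v powr (\<beta> - 1) *\<^sub>R v) \<le> 4 * norm (w - v) powr \<beta>"
proof (cases "v = 0 \<or> w = 0")
  case True
  have "norm u powr (\<beta> - 1) * norm u = norm u powr \<beta>" for u :: 'a
    by (cases "u = 0") (simp_all add: powr_mult_base mult.commute)
  with True show ?thesis
    by auto
next
  case False
  then show ?thesis
    using norm_scaleR_powr_diff_le_ordered[OF assms, of v w]
      norm_scaleR_powr_diff_le_ordered[OF assms, of w v]
    by (cases "norm v \<le> norm w") (auto simp: norm_minus_commute)
qed

lemma bounded_holder_on_vec_nth_comp:
  fixes g :: "'a::real_normed_vector \<Rightarrow> 'b::real_normed_vector" and S :: "('a^'n) set"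
  assumes "bounded S" "0 < \<alpha>" "\<alpha> \<le> \<gamma>" "0 \<le> C"
    and g: "\<And>u v. norm (g u - g v) \<le> C * norm (u - v) powr \<gamma>"
  shows "bounded_holder_on \<alpha> S (\<lambda>x. g (x $ i))"
proof (rule holder_estimate_imp_bounded_holder_on[OF assms(1-3)])
  fix x y :: "'a^'n"
  have "norm (x $ i - y $ i) \<le> dist x y"
    using Finite_Cartesian_Product.norm_nth_le[of "x - y" i] by (simp add: dist_norm)
  then have "norm (x $ i - y $ i) powr \<gamma> \<le> dist x y powr \<gamma>"
    using assms(2,3) by (intro powr_mono2) auto
  then show "norm (g (x $ i) - g (y $ i)) \<le> C * dist x y powr \<gamma>"
    using g[of "x $ i" "y $ i"] assms(4) by (meson mult_left_mono order_trans)
qed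

lemma bounded_holder_on_nth:
  fixes S :: "('a::real_normed_vector^'n) set"
  assumes "bounded S" "0 < \<alpha>" "\<alpha> \<le> 1"
  shows "bounded_holder_on \<alpha> S (\<lambda>x. x $ i)"
  by (rule bounded_holder_on_vec_nth_comp[OF assms, where C = 1]) simp_all

lemma bounded_holder_on_norm_nth_powr:
  fixes S :: "(complex^'n) set"
  assumes "bounded S" "0 < \<alpha>" "\<alpha> \<le> \<gamma>" "\<gamma> \<le> 1"
  shows "bounded_holder_on \<alpha> S (\<lambda>x. complex_of_real (cmod (x $ i) powr \<gamma>))"
proof (rule bounded_holder_on_vec_nth_comp[OF assms(1-3), where C = 1])
  fix u v :: complex
  have "\<bar>cmod u powr \<gamma> - cmod v powr \<gamma>\<bar> \<le> \<bar>cmod u - cmod v\<bar> powr \<gamma>"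
    using assms by (intro abs_powr_diff_le) auto
  also have "\<dots> \<le> cmod (u - v) powr \<gamma>"
    using assms norm_triangle_ineq3[of u v] by (intro powr_mono2) auto
  finally show "cmod (complex_of_real (cmod u powr \<gamma>) - complex_of_real (cmod v powr \<gamma>))
      \<le> 1 * cmod (u - v) powr \<gamma>"
    by (simp flip: of_real_diff)
qed simp

lemma bounded_holder_on_norm_nth:
  fixes S :: "(complex^'n) set"
  assumes "bounded S" "0 < \<alpha>" "\<alpha> \<le> 1"
  shows "bounded_holder_on \<alpha> S (\<lambda>x. complex_of_real (cmod (x $ i)))"
  using bounded_holder_on_norm_nth_powr[OF assms order_refl] by simp

lemma bounded_holder_on_norm_powr_mult_nth:
  fixes S :: "(complex^'n) set"
  assumes "bounded S" "0 < \<alpha>" "\<alpha> \<le> \<beta>" "\<beta> < 1"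
  shows "bounded_holder_on \<alpha> S (\<lambda>x. complex_of_real (cmod (x $ i) powr (\<beta> - 1)) * x $ i)"
proof (rule bounded_holder_on_vec_nth_comp[OF assms(1-3), where C = 4])
  fix u v :: complex
  show "cmod (complex_of_real (cmod u powr (\<beta> - 1)) * u - complex_of_real (cmod v powr (\<beta> - 1)) * v)
      \<le> 4 * cmod (u - v) powr \<beta>"
    using norm_scaleR_powr_diff_le[of \<beta> u v] assms by (simp add: scaleR_conv_of_real)
qed simp

section \<open>Smooth functions\<close>

lemma has_derivative_frechet_derivative_open:
  assumes "open S" "f differentiable_on S" "x \<in> S"
  shows "(f has_derivative frechet_derivative f (at x)) (at x)"
  using assms differentiable_on_eq_differentiable_at frechet_derivative_works by blast

lemma frechet_derivative_cong_open:
  assumes "open S" "x \<in> S" "\<And>y. y \<in> S \<Longrightarrow> f y = g y"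
  shows "frechet_derivative f (at x) = frechet_derivative g (at x)"
proof -
  have "(f has_derivative D) (at x) \<longleftrightarrow> (g has_derivative D) (at x)" for D
    using assms has_derivative_transform_within_open by metis
  then show ?thesis
    unfolding frechet_derivative_def by simp
qed

lemma Ck_on_cong:
  assumes "open S" "\<And>x. x \<in> S \<Longrightarrow> f x = g x" "Ck_on k S f"
  shows "Ck_on k S g"
  using assms(2,3)
proof (induction k arbitrary: f g)
  case 0
  then show ?case
    using continuous_on_cong by auto
next
  case (Suc k)
  have "g differentiable at x" if x: "x \<in> S" for x
  proof -
    have "f differentiable at x"
      using Suc.prems(2) x differentiable_on_eq_differentiable_at[OF assms(1)] by auto
    then obtain D where "(f has_derivative D) (at x)"
      unfolding differentiable_def by blast
    then have "(g has_derivative D) (at x)"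
      by (rule has_derivative_transform_within_open[OF _ assms(1) x]) (use Suc.prems(1) in simp)
    then show ?thesis
      unfolding differentiable_def by blast
  qed
  then have "g differentiable_on S"
    using differentiable_on_eq_differentiable_at[OF assms(1)] by blast
  moreover have "continuous_on S g"
    using Suc.prems continuous_on_cong by auto
  moreover have "Ck_on k S (\<lambda>z. frechet_derivative g (at z) v)" for v
    using Suc.IH[of "\<lambda>z. frechet_derivative f (at z) v"] Suc.prems
      frechet_derivative_cong_open[OF assms(1), of _ f g] by simp
  ultimately show ?case
    by simp
qed

lemma Ck_on_bounded_linear:
  assumes "open S" "bounded_linear h" "Ck_on k S f"
  shows "Ck_on k S (\<lambda>x. h (f x))"
  using assms(3)
proof (induction k arbitrary: f)
  case 0
  then show ?case
    using continuous_on_compose2[OF linear_continuous_on[OF assms(2)]] by auto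
next
  case (Suc k)
  have hd: "((\<lambda>x. h (f x)) has_derivative (\<lambda>v. h (frechet_derivative f (at x) v))) (at x)"
    if "x \<in> S" for x
    using bounded_linear.has_derivative[OF assms(2)] has_derivative_frechet_derivative_open
      assms(1) Suc.prems that by fastforce
  then have "(\<lambda>x. h (f x)) differentiable_on S"
    using differentiable_on_eq_differentiable_at[OF assms(1)] differentiable_def by blast
  moreover have "continuous_on S (\<lambda>x. h (f x))"
    using Suc.prems continuous_on_compose2[OF linear_continuous_on[OF assms(2)]] by auto
  moreover have "Ck_on k S (\<lambda>z. frechet_derivative (\<lambda>x. h (f x)) (at z) v)" for v
  proof (rule Ck_on_cong[OF assms(1) _ Suc.IH])
    show "h (frechet_derivative f (at z) v) = frechet_derivative (\<lambda>x. h (f x)) (at z) v"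
      if "z \<in> S" for z
      by (metis frechet_derivative_at[OF hd[OF that]])
  qed (use Suc.prems in auto)
  ultimately show ?case
    by simp
qed

lemma Ck_on_add:
  assumes "open S" "Ck_on k S f" "Ck_on k S g"
  shows "Ck_on k S (\<lambda>x. f x + g x)"
  using assms(2,3)
proof (induction k arbitrary: f g)
  case 0
  then show ?case
    using continuous_on_add by auto
next
  case (Suc k)
  have hd: "((\<lambda>x. f x + g x) has_derivative
      (\<lambda>v. frechet_derivative f (at x) v + frechet_derivative g (at x) v)) (at x)"
    if "x \<in> S" for x
    using Suc.prems has_derivative_frechet_derivative_open[OF assms(1)] that
    by (auto intro!: has_derivative_add)
  then have "(\<lambda>x. f x + g x) differentiable_on S"
    using differentiable_on_eq_differentiable_at[OF assms(1)] differentiable_def by blast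
  moreover have "continuous_on S (\<lambda>x. f x + g x)"
    using Suc.prems continuous_on_add by auto
  moreover have "Ck_on k S (\<lambda>z. frechet_derivative (\<lambda>x. f x + g x) (at z) v)" for v
  proof (rule Ck_on_cong[OF assms(1) _ Suc.IH])
    show "frechet_derivative f (at z) v + frechet_derivative g (at z) v
        = frechet_derivative (\<lambda>x. f x + g x) (at z) v" if "z \<in> S" for z
      by (metis frechet_derivative_at[OF hd[OF that]])
  qed (use Suc.prems in auto)
  ultimately show ?case
    by simp
qed

lemma smooth_on_bounded_linear:
  "open S \<Longrightarrow> bounded_linear h \<Longrightarrow> smooth_on S f \<Longrightarrow> smooth_on S (\<lambda>x. h (f x))"
  unfolding smooth_on_def using Ck_on_bounded_linear by blast

lemma smooth_on_add:
  "open S \<Longrightarrow> smooth_on S f \<Longrightarrow> smooth_on S g \<Longrightarrow> smooth_on S (\<lambda>x. f x + g x)"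
  unfolding smooth_on_def using Ck_on_add by blast

lemma smooth_on_frechet_derivative:
  "smooth_on S f \<Longrightarrow> smooth_on S (\<lambda>x. frechet_derivative f (at x) v)"
  unfolding smooth_on_def by (metis Ck_on.simps(2))

lemma smooth_on_imp_continuous_on: "smooth_on S f \<Longrightarrow> continuous_on S f"
  unfolding smooth_on_def by (metis Ck_on.simps(1))

lemma smooth_on_has_derivative:
  "open S \<Longrightarrow> smooth_on S f \<Longrightarrow> x \<in> S \<Longrightarrow> (f has_derivative frechet_derivative f (at x)) (at x)"
  unfolding smooth_on_def by (metis Ck_on.simps(2) has_derivative_frechet_derivative_open)

lemma smooth_on_dz:
  assumes "open S" "smooth_on S f"
  shows "smooth_on S (dz j f)"
proof -
  have "dz j f = (\<lambda>x. (1/2) * frechet_derivative f (at x) (axis j 1)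
                     + (- \<i>/2) * frechet_derivative f (at x) (axis j \<i>))"
    unfolding dz_def by (auto simp: field_simps)
  then show ?thesis
    by (simp only:)
      (intro smooth_on_add smooth_on_bounded_linear[OF assms(1) bounded_linear_mult_right]
        smooth_on_frechet_derivative assms)
qed

lemma smooth_on_dzbar:
  assumes "open S" "smooth_on S f"
  shows "smooth_on S (dzbar j f)"
proof -
  have "dzbar j f = (\<lambda>x. (1/2) * frechet_derivative f (at x) (axis j 1)
                     + (\<i>/2) * frechet_derivative f (at x) (axis j \<i>))"
    unfolding dzbar_def by (auto simp: field_simps)
  then show ?thesis
    by (simp only:)
      (intro smooth_on_add smooth_on_bounded_linear[OF assms(1) bounded_linear_mult_right]
        smooth_on_frechet_derivative assms)
qed

lemma smooth_on_lipschitz_on: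
  fixes g :: "'a::euclidean_space \<Rightarrow> 'b::real_normed_vector"
  assumes "open S" "smooth_on S g" "compact K" "convex K" "K \<subseteq> S"
  obtains L where "L-lipschitz_on K g"
proof -
  have "\<exists>M>0. \<forall>x\<in>K. norm (frechet_derivative g (at x) b) \<le> M" for b
  proof -
    have "continuous_on K (\<lambda>x. frechet_derivative g (at x) b)"
      using smooth_on_imp_continuous_on[OF smooth_on_frechet_derivative[OF assms(2)]] assms(5)
      by (rule continuous_on_subset)
    then have "bounded ((\<lambda>x. frechet_derivative g (at x) b) ` K)"
      using assms(3) compact_continuous_image compact_imp_bounded by blast
    then show ?thesis
      unfolding bounded_pos by simp
  qed
  then obtain M where M0: "\<And>b. 0 < M b"
    and M: "\<And>b x. x \<in> K \<Longrightarrow> norm (frechet_derivative g (at x) b) \<le> M b"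
    by metis
  have "(\<Sum>b\<in>Basis. M b)-lipschitz_on K g"
  proof (rule bounded_derivative_imp_lipschitz[OF _ assms(4)])
    fix x assume "x \<in> K"
    then have D: "(g has_derivative frechet_derivative g (at x)) (at x)"
      using smooth_on_has_derivative[OF assms(1,2)] assms(5) by blast
    then show "(g has_derivative frechet_derivative g (at x)) (at x within K)"
      by (rule has_derivative_at_withinI)
    show "onorm (frechet_derivative g (at x)) \<le> (\<Sum>b\<in>Basis. M b)"
    proof (rule onorm_componentwise_le)
      show "bounded_linear (frechet_derivative g (at x))"
        using D by (rule has_derivative_bounded_linear)
      show "(\<Sum>b\<in>Basis. norm (frechet_derivative g (at x) b)) \<le> (\<Sum>b\<in>Basis. M b)"
        using M[OF \<open>x \<in> K\<close>] by (rule sum_mono)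
    qed
  qed (simp add: M0 less_imp_le sum_nonneg)
  then show ?thesis ..
qed

lemma smooth_on_imp_bounded_holder_on:
  fixes g :: "'a::euclidean_space \<Rightarrow> 'b::real_normed_vector"
  assumes "open S" "smooth_on S g" "compact K" "convex K" "K \<subseteq> S" "0 < \<alpha>" "\<alpha> \<le> 1"
  shows "bounded_holder_on \<alpha> K g"
proof -
  obtain L where "L-lipschitz_on K g"
    using smooth_on_lipschitz_on[OF assms(1-5)] .
  then show ?thesis
    using lipschitz_on_imp_bounded_holder_on[OF compact_imp_bounded[OF assms(3)] assms(6,7)]
    by blast
qed

section \<open>Wirtinger derivatives\<close>

lemmas has_derivative_vec_nth [derivative_intros] =
  bounded_linear.has_derivative[OF bounded_linear_vec_nth]

lemma has_derivative_imp_dz: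
  "(f has_derivative D) (at x) \<Longrightarrow> dz j f x = (D (axis j 1) - \<i> * D (axis j \<i>)) / 2"
  unfolding dz_def using frechet_derivative_at by metis

lemma has_derivative_imp_dzbar:
  "(f has_derivative D) (at x) \<Longrightarrow> dzbar j f x = (D (axis j 1) + \<i> * D (axis j \<i>)) / 2"
  unfolding dzbar_def using frechet_derivative_at by metis

lemma dz_cong_open:
  "open S \<Longrightarrow> x \<in> S \<Longrightarrow> (\<And>y. y \<in> S \<Longrightarrow> f y = g y) \<Longrightarrow> dz j f x = dz j g x"
  unfolding dz_def using frechet_derivative_cong_open[of S x f g] by simp

lemma dz_add:
  assumes "f differentiable at x" "g differentiable at x"
  shows "dz j (\<lambda>y. f y + g y) x = dz j f x + dz j g x"
proof -
  obtain Df Dg where Df: "(f has_derivative Df) (at x)" and Dg: "(g has_derivative Dg) (at x)"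
    using assms unfolding differentiable_def by blast
  show ?thesis
    unfolding has_derivative_imp_dz[OF has_derivative_add[OF Df Dg]] has_derivative_imp_dz[OF Df]
      has_derivative_imp_dz[OF Dg]
    by (simp add: algebra_simps diff_divide_distrib add_divide_distrib)
qed

lemma dz_mult:
  assumes "f differentiable at x" "g differentiable at x"
  shows "dz j (\<lambda>y. f y * g y) x = f x * dz j g x + g x * dz j f x"
proof -
  obtain Df Dg where Df: "(f has_derivative Df) (at x)" and Dg: "(g has_derivative Dg) (at x)"
    using assms unfolding differentiable_def by blast
  show ?thesis
    unfolding has_derivative_imp_dz[OF has_derivative_mult[OF Df Dg]] has_derivative_imp_dz[OF Df]
      has_derivative_imp_dz[OF Dg]
    by (simp add: algebra_simps diff_divide_distrib add_divide_distrib)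
qed

lemma dzbar_mult:
  assumes "f differentiable at x" "g differentiable at x"
  shows "dzbar j (\<lambda>y. f y * g y) x = f x * dzbar j g x + g x * dzbar j f x"
proof -
  obtain Df Dg where Df: "(f has_derivative Df) (at x)" and Dg: "(g has_derivative Dg) (at x)"
    using assms unfolding differentiable_def by blast
  show ?thesis
    unfolding has_derivative_imp_dzbar[OF has_derivative_mult[OF Df Dg]]
      has_derivative_imp_dzbar[OF Df] has_derivative_imp_dzbar[OF Dg]
    by (simp add: algebra_simps add_divide_distrib)
qed

lemma dz_dzbar_mult:
  assumes "open S" "x \<in> S"
    and "\<And>y. y \<in> S \<Longrightarrow> f differentiable at y" "\<And>y. y \<in> S \<Longrightarrow> g differentiable at y"
    and "dzbar k f differentiable at x" "dzbar k g differentiable at x"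
  shows "dz j (dzbar k (\<lambda>y. f y * g y)) x
    = f x * dz j (dzbar k g) x + dzbar k g x * dz j f x
      + g x * dz j (dzbar k f) x + dzbar k f x * dz j g x"
proof -
  have "dz j (dzbar k (\<lambda>y. f y * g y)) x = dz j (\<lambda>y. f y * dzbar k g y + g y * dzbar k f y) x"
    using assms(1-4) dzbar_mult by (intro dz_cong_open) blast+
  also have "\<dots> = dz j (\<lambda>y. f y * dzbar k g y) x + dz j (\<lambda>y. g y * dzbar k f y) x"
    using assms by (intro dz_add differentiable_mult) auto
  also have "\<dots> = f x * dz j (dzbar k g) x + dzbar k g x * dz j f x
      + (g x * dz j (dzbar k f) x + dzbar k f x * dz j g x)"
    using assms by (simp add: dz_mult)
  finally show ?thesis
    by (simp add: add.assoc)
qed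

section \<open>The potential \<open>|z\<^sub>1|\<^sup>2\<^sup>\<beta>\<close>\<close>

lemma norm_powr_eq_Re_Im: "cmod z powr t = ((Re z)\<^sup>2 + (Im z)\<^sup>2) powr (t / 2)"
  by (simp add: cmod_def powr_half_sqrt[symmetric] powr_powr)

lemma has_derivative_norm_nth_powr:
  fixes w :: "complex^'n"
  assumes "w $ i \<noteq> 0"
  shows "((\<lambda>v. cmod (v $ i) powr t) has_derivative
    (\<lambda>h. t * cmod (w $ i) powr (t - 2) * (Re (w $ i) * Re (h $ i) + Im (w $ i) * Im (h $ i))))
    (at w)"
proof -
  define q where "q v = (Re (v $ i))\<^sup>2 + (Im (v $ i))\<^sup>2" for v :: "complex^'n"
  have q: "0 < q w"
    using assms by (simp add: q_def complex_neq_0)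
  have dq: "(q has_derivative (\<lambda>h. 2 * Re (w $ i) * Re (h $ i) + 2 * Im (w $ i) * Im (h $ i)))
    (at w)"
    unfolding q_def[abs_def] by (auto intro!: derivative_eq_intros)
  have D: "((\<lambda>v. q v powr (t / 2)) has_derivative
      (\<lambda>h. q w powr (t / 2) * (0 * ln (q w)
         + (2 * Re (w $ i) * Re (h $ i) + 2 * Im (w $ i) * Im (h $ i)) * (t / 2) / q w))) (at w)"
    using has_derivative_powr[where f = "\<lambda>_. t / 2" and X = UNIV, OF dq has_derivative_const q]
    by simp
  have pw: "q w powr (t / 2) / q w = q w powr ((t - 2) / 2)"
    using q by (simp add: powr_diff diff_divide_distrib)
  show ?thesis
    unfolding norm_powr_eq_Re_Im q_def[symmetric]
    by (rule has_derivative_eq_rhs[OF D])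
      (use q in \<open>simp add: fun_eq_iff pw[symmetric] field_simps\<close>)
qed

lemma open_vec_nth_neq: "open {v :: 'a::real_normed_vector^'n. v $ i \<noteq> c}"
  by (intro open_Collect_neq continuous_intros)

definition cone_potential :: "real \<Rightarrow> complex^2 \<Rightarrow> complex"
  where "cone_potential \<beta> w = complex_of_real (cmod (w $ 1) powr (2 * \<beta>))"

lemma has_derivative_cone_potential:
  assumes "w $ 1 \<noteq> 0"
  shows "(cone_potential \<beta> has_derivative (\<lambda>h. complex_of_real
    (2 * \<beta> * cmod (w $ 1) powr (2 * \<beta> - 2)
      * (Re (w $ 1) * Re (h $ 1) + Im (w $ 1) * Im (h $ 1))))) (at w)"
  unfolding cone_potential_def[abs_def]
  by (rule has_derivative_of_real[OF has_derivative_norm_nth_powr[OF assms]])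

lemma dz_cone_potential:
  assumes "w $ 1 \<noteq> 0"
  shows "dz j (cone_potential \<beta>) w
    = (if j = 1 then complex_of_real (\<beta> * cmod (w $ 1) powr (2 * \<beta> - 2)) * cnj (w $ 1) else 0)"
  unfolding has_derivative_imp_dz[OF has_derivative_cone_potential[OF assms]]
  using exhaust_2[of j] by (auto simp: axis_def complex_eq_iff algebra_simps)

lemma dzbar_cone_potential:
  assumes "w $ 1 \<noteq> 0"
  shows "dzbar k (cone_potential \<beta>) w
    = (if k = 1 then complex_of_real (\<beta> * cmod (w $ 1) powr (2 * \<beta> - 2)) * w $ 1 else 0)"
  unfolding has_derivative_imp_dzbar[OF has_derivative_cone_potential[OF assms]]
  using exhaust_2[of k] by (auto simp: axis_def complex_eq_iff algebra_simps)

lemma has_derivative_dzbar_cone_potential: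
  assumes "w $ 1 \<noteq> 0"
  shows "(dzbar k (cone_potential \<beta>) has_derivative (\<lambda>h. if k = 1 then
      complex_of_real (\<beta> * cmod (w $ 1) powr (2 * \<beta> - 2)) * h $ 1
      + complex_of_real (\<beta> * ((2 * \<beta> - 2) * cmod (w $ 1) powr (2 * \<beta> - 4)
          * (Re (w $ 1) * Re (h $ 1) + Im (w $ 1) * Im (h $ 1)))) * w $ 1
    else 0)) (at w)"
proof -
  have dn: "((\<lambda>v. cmod (v $ 1) powr (2 * \<beta> - 2)) has_derivative (\<lambda>h. (2 * \<beta> - 2)
      * cmod (w $ 1) powr (2 * \<beta> - 4) * (Re (w $ 1) * Re (h $ 1) + Im (w $ 1) * Im (h $ 1))))
    (at w)"
    using has_derivative_norm_nth_powr[OF assms, of "2 * \<beta> - 2"] by simp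
  have "((\<lambda>v. if k = 1 then complex_of_real (\<beta> * cmod (v $ 1) powr (2 * \<beta> - 2)) * v $ 1 else 0)
      has_derivative (\<lambda>h. if k = 1 then
      complex_of_real (\<beta> * cmod (w $ 1) powr (2 * \<beta> - 2)) * h $ 1
      + complex_of_real (\<beta> * ((2 * \<beta> - 2) * cmod (w $ 1) powr (2 * \<beta> - 4)
          * (Re (w $ 1) * Re (h $ 1) + Im (w $ 1) * Im (h $ 1)))) * w $ 1
    else 0)) (at w)"
    using has_derivative_mult[OF has_derivative_of_real[OF has_derivative_mult_right[OF dn, of \<beta>]]
        has_derivative_vec_nth[OF has_derivative_ident, of 1]]
    by (cases "k = 1") simp_all
  then show ?thesis
    by (rule has_derivative_transform_within_open[OF _ open_vec_nth_neq[of 1 0]])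
      (auto simp: assms dzbar_cone_potential)
qed

lemma dz_dzbar_cone_potential:
  assumes "w $ 1 \<noteq> 0"
  shows "dz j (dzbar k (cone_potential \<beta>)) w
    = (if j = 1 \<and> k = 1 then complex_of_real (\<beta>\<^sup>2 * cmod (w $ 1) powr (2 * \<beta> - 2)) else 0)"
proof -
  define z where "z = w $ 1"
  define A B where "A = \<beta> * cmod z powr (2 * \<beta> - 2)"
    and "B = \<beta> * (2 * \<beta> - 2) * cmod z powr (2 * \<beta> - 4)"
  note D = has_derivative_imp_dz[OF has_derivative_dzbar_cone_potential[OF assms]]
  have dz11: "dz 1 (dzbar 1 (cone_potential \<beta>)) w
      = (2 * complex_of_real A + complex_of_real B * (z * cnj z)) / 2"
    unfolding D z_def A_def B_def by (simp add: axis_def complex_eq_iff algebra_simps)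
  have "cmod z ^ 2 = cmod z powr 2"
    using assms by (simp add: z_def)
  moreover have "cmod z powr (2 * \<beta> - 4) * cmod z powr 2 = cmod z powr (2 * \<beta> - 2)"
    unfolding powr_add[symmetric] by (simp add: algebra_simps)
  ultimately have "B * cmod z ^ 2 = \<beta> * (2 * \<beta> - 2) * cmod z powr (2 * \<beta> - 2)"
    unfolding B_def by (simp only: mult.assoc)
  then have "complex_of_real B * (z * cnj z)
      = complex_of_real (\<beta> * (2 * \<beta> - 2) * cmod z powr (2 * \<beta> - 2))"
    unfolding complex_norm_square[symmetric] of_real_mult[symmetric] by simp
  then have "dz 1 (dzbar 1 (cone_potential \<beta>)) w = complex_of_real (\<beta>\<^sup>2 * cmod z powr (2 * \<beta> - 2))"
    unfolding dz11 A_def by (simp add: power2_eq_square algebra_simps)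
  moreover have "dz j (dzbar k (cone_potential \<beta>)) w = 0" if "j = 2 \<or> k = 2"
    using that unfolding D by (auto simp: axis_def)
  ultimately show ?thesis
    using exhaust_2[of j] exhaust_2[of k] unfolding z_def by auto
qed

lemma ddbar_coeff_mult_cone_potential:
  assumes "open S" "smooth_on S f" "x \<in> S" "x $ 1 \<noteq> 0"
  shows "ddbar_coeff (\<lambda>w. f w * cone_potential \<beta> w) x $ j $ k
    = f x * dz j (dzbar k (cone_potential \<beta>)) x + dzbar k (cone_potential \<beta>) x * dz j f x
      + cone_potential \<beta> x * dz j (dzbar k f) x + dzbar k f x * dz j (cone_potential \<beta>) x"
proof -
  have X: "open (S \<inter> {v. v $ 1 \<noteq> 0})" "x \<in> S \<inter> {v. v $ 1 \<noteq> 0}"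
    using assms(1,3,4) by (simp_all add: open_Int open_vec_nth_neq)
  have Df: "f differentiable at y" "dzbar k f differentiable at y" if "y \<in> S" for y
    using smooth_on_has_derivative[OF assms(1) _ that] assms(2) smooth_on_dzbar[OF assms(1,2)]
    unfolding differentiable_def by blast+
  have DG: "cone_potential \<beta> differentiable at y" "dzbar k (cone_potential \<beta>) differentiable at y"
    if "y $ 1 \<noteq> 0" for y
    using has_derivative_cone_potential[OF that] has_derivative_dzbar_cone_potential[OF that]
    unfolding differentiable_def by blast+
  show ?thesis
    unfolding ddbar_coeff_def vec_lambda_beta by (rule dz_dzbar_mult[OF X]) (use Df DG X in auto)
qed

section \<open>Weighted coefficients\<close>

definition cone_weight :: "real \<Rightarrow> 2 \<Rightarrow> complex^2 \<Rightarrow> real"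
  where "cone_weight \<beta> j x = (if j = 1 then cmod (x $ 1) powr (1 - \<beta>) else 1)"

text \<open>Off the divisor this is the \<open>(j, k)\<close> coefficient of \<open>\<eta> + ddbar (F |z\<^sub>1|^(2\<beta>))\<close>
  times \<open>cone_weight \<beta> j * cone_weight \<beta> k\<close> (\<open>weighted_potential_coeff_eq\<close>), written so that
  it stays Hoelder across \<open>z\<^sub>1 = 0\<close>.\<close>
definition weighted_potential_coeff ::
  "real \<Rightarrow> (complex^2 \<Rightarrow> complex^2^2) \<Rightarrow> (complex^2 \<Rightarrow> real) \<Rightarrow> 2 \<Rightarrow> 2 \<Rightarrow> complex^2 \<Rightarrow> complex"
  where "weighted_potential_coeff \<beta> \<eta> F j k x =
    (let f = (\<lambda>w. complex_of_real (F w)); z = x $ 1;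
         s = complex_of_real (cmod z); t = complex_of_real (cmod z powr (1 - \<beta>));
         u = complex_of_real (cmod z powr \<beta>); p = complex_of_real (cmod z powr (\<beta> - 1))
     in if j = 1 \<and> k = 1 then
          \<eta> x $ 1 $ 1 * t * t + complex_of_real (\<beta>\<^sup>2) * f x + complex_of_real \<beta> * z * dz 1 f x
          + s * s * dz 1 (dzbar 1 f) x + complex_of_real \<beta> * cnj z * dzbar 1 f x
        else if j = 1 then
          \<eta> x $ 1 $ 2 * t + s * u * dz 1 (dzbar 2 f) x
          + complex_of_real \<beta> * (p * cnj z) * dzbar 2 f x
        else if k = 1 then
          \<eta> x $ 2 $ 1 * t + s * u * dz 2 (dzbar 1 f) x + complex_of_real \<beta> * (p * z) * dz 2 f x
        else \<eta> x $ 2 $ 2 + u * u * dz 2 (dzbar 2 f) x)"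

lemma powr_cone_weight_eqs:
  fixes s \<beta> :: real
  assumes "0 < s"
  shows "s powr (2 * \<beta> - 2) = 1 / (s powr (1 - \<beta>) * s powr (1 - \<beta>))"
    and "s powr (2 * \<beta>) = s * s / (s powr (1 - \<beta>) * s powr (1 - \<beta>))"
    and "s powr (2 * \<beta> - 2) = s powr (\<beta> - 1) / s powr (1 - \<beta>)"
    and "s powr (2 * \<beta>) = s * s powr \<beta> / s powr (1 - \<beta>)"
    and "s powr (2 * \<beta>) = s powr \<beta> * s powr \<beta>"
  using assms by (simp_all add: field_simps power2_eq_square powr_mult_base flip: powr_add)

lemma weighted_potential_coeff_eq:
  assumes "open S" "smooth_on S F" "x \<in> S" "x $ 1 \<noteq> 0"
  shows "(\<eta> x + ddbar_coeff (\<lambda>w. complex_of_real (F w * cmod (w $ 1) powr (2 * \<beta>))) x) $ j $ k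
      * complex_of_real (cone_weight \<beta> j x * cone_weight \<beta> k x)
    = weighted_potential_coeff \<beta> \<eta> F j k x"
proof -
  define f where "f = (\<lambda>w. complex_of_real (F w))"
  define s where "s = cmod (x $ 1)"
  have s: "0 < s"
    using assms(4) by (simp add: s_def)
  have "smooth_on S f"
    unfolding f_def by (rule smooth_on_bounded_linear[OF assms(1) bounded_linear_of_real assms(2)])
  moreover have "(\<lambda>w. complex_of_real (F w * cmod (w $ 1) powr (2 * \<beta>)))
      = (\<lambda>w. f w * cone_potential \<beta> w)"
    by (simp add: f_def cone_potential_def)
  ultimately have entry:
    "(\<eta> x + ddbar_coeff (\<lambda>w. complex_of_real (F w * cmod (w $ 1) powr (2 * \<beta>))) x) $ j $ k
    = \<eta> x $ j $ k + (f x * dz j (dzbar k (cone_potential \<beta>)) x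
      + dzbar k (cone_potential \<beta>) x * dz j f x + cone_potential \<beta> x * dz j (dzbar k f) x
      + dzbar k f x * dz j (cone_potential \<beta>) x)"
    using ddbar_coeff_mult_cone_potential[OF assms(1) _ assms(3,4)]
    by (simp only: vector_add_component)
  note defs = f_def dz_cone_potential[OF assms(4)] dzbar_cone_potential[OF assms(4)]
    dz_dzbar_cone_potential[OF assms(4)] cone_potential_def weighted_potential_coeff_def Let_def
    cone_weight_def s_def[symmetric]
  note pw = powr_cone_weight_eqs[OF s, of \<beta>]
  consider "j = 1" "k = 1" | "j = 1" "k = 2" | "j = 2" "k = 1" | "j = 2" "k = 2"
    using exhaust_2 by metis
  then show ?thesis
  proof cases
    case 1
    then show ?thesis
      using s unfolding entry by (simp add: defs pw(1,2)) (simp add: field_simps)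
  next
    case 2
    then show ?thesis
      using s unfolding entry by (simp add: defs pw(3,4)) (simp add: field_simps)
  next
    case 3
    then show ?thesis
      using s unfolding entry by (simp add: defs pw(3,4)) (simp add: field_simps)
  next
    case 4
    then show ?thesis
      unfolding entry by (simp add: defs pw(5))
  qed
qed

lemma bounded_holder_on_weighted_potential_coeff:
  assumes "0 < \<alpha>" "\<alpha> \<le> \<beta>" "\<alpha> \<le> 1 - \<beta>"
    and "open S" "compact K" "convex K" "K \<subseteq> S"
    and "smooth_real_11_form_on S \<eta>" "smooth_on S F"
  shows "bounded_holder_on \<alpha> K (weighted_potential_coeff \<beta> \<eta> F j k)"
proof -
  have K: "bounded K"
    using assms(5) by (rule compact_imp_bounded)
  have \<alpha>: "\<alpha> \<le> 1" "\<beta> < 1"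
    using assms(1-3) by linarith+
  have smooth: "bounded_holder_on \<alpha> K g" if "smooth_on S g" for g :: "complex^2 \<Rightarrow> complex"
    using smooth_on_imp_bounded_holder_on[OF assms(4) that assms(5-7,1) \<alpha>(1)] .
  have sf: "smooth_on S (\<lambda>w. complex_of_real (F w))"
    by (rule smooth_on_bounded_linear[OF assms(4) bounded_linear_of_real assms(9)])
  note f = smooth[OF sf] smooth[OF smooth_on_dz[OF assms(4) sf]]
    smooth[OF smooth_on_dzbar[OF assms(4) sf]]
    smooth[OF smooth_on_dz[OF assms(4) smooth_on_dzbar[OF assms(4) sf]]]
  have \<eta>: "bounded_holder_on \<alpha> K (\<lambda>x. \<eta> x $ j $ k)" for j k
    using assms(8) smooth unfolding smooth_real_11_form_on_def by blast
  have pow_z: "bounded_holder_on \<alpha> K (\<lambda>x. complex_of_real (cmod (x $ 1) powr (\<beta> - 1)) * x $ 1)"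
    by (rule bounded_holder_on_norm_powr_mult_nth[OF K assms(1,2) \<alpha>(2)])
  have pow_cnj_z:
    "bounded_holder_on \<alpha> K (\<lambda>x. complex_of_real (cmod (x $ 1) powr (\<beta> - 1)) * cnj (x $ 1))"
    using bounded_holder_on_cnj[OF pow_z] by simp
  note blocks = pow_z pow_cnj_z \<eta> f bounded_holder_on_norm_nth_powr[OF K assms(1,3)]
    bounded_holder_on_norm_nth_powr[OF K assms(1,2)] bounded_holder_on_norm_nth[OF K assms(1) \<alpha>(1)]
    bounded_holder_on_nth[OF K assms(1) \<alpha>(1)]
    bounded_holder_on_cnj[OF bounded_holder_on_nth[OF K assms(1) \<alpha>(1)]]
  show ?thesis
    unfolding weighted_potential_coeff_def Let_def
    using assms(1,2) \<alpha>
    by (intro blocks bounded_holder_on_if_const bounded_holder_on_add bounded_holder_on_mult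
      bounded_holder_on_const) auto
qed

lemma weighted_potential_coeff_divisor:
  assumes "p $ 1 = 0"
  shows "weighted_potential_coeff \<beta> \<eta> F j k p
    = (if j \<noteq> k then 0 else if j = 1 then complex_of_real (\<beta>\<^sup>2 * F p) else \<eta> p $ 2 $ 2)"
  using assms exhaust_2[of j] exhaust_2[of k] by (auto simp: weighted_potential_coeff_def Let_def)

section \<open>Cone singularities\<close>

lemma cone_sigma_coeff_eq:
  assumes "0 < a" "x $ 1 \<noteq> 0"
  shows "cone_sigma_coeff \<beta> a b H j k x
    = H x $ j $ k * complex_of_real (cone_weight \<beta> j x * cone_weight \<beta> k x
        / ((if j = 1 then a powr \<beta> else b) * (if k = 1 then a powr \<beta> else b)))
      - complex_of_real (if j \<noteq> k then 0 else if j = 1 then \<beta>\<^sup>2 else 1)"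
proof -
  define s where "s = cmod (x $ 1)"
  have s: "0 < s"
    using assms(2) by (simp add: s_def)
  define t where "t = s powr (1 - \<beta>)"
  have t: "0 < t"
    using s by (simp add: t_def)
  have w_eq: "(a * s) powr (1 - \<beta>) = a * t / a powr \<beta>"
    using assms(1) s by (simp add: t_def powr_mult powr_diff)
  have "(a * s) powr (2 * \<beta> - 2) * ((a * s) powr (1 - \<beta>) * (a * s) powr (1 - \<beta>)) = 1"
    using assms(1) s by (simp flip: powr_add)
  then have m_eq: "(a * s) powr (2 * \<beta> - 2) = (a powr \<beta> * a powr \<beta>) / (a * t * (a * t))"
    using assms(1) t unfolding w_eq by (simp add: field_simps)
  show ?thesis
    using exhaust_2[of j] exhaust_2[of k]
    by (elim disjE; simp add: cone_sigma_coeff_def cone_weight_def Let_def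
        s_def[symmetric] t_def[symmetric]
        w_eq m_eq; use assms(1) t in \<open>simp add: field_simps\<close>)
qed

lemma standard_cone_atI:
  fixes E :: "2 \<Rightarrow> 2 \<Rightarrow> complex^2 \<Rightarrow> complex"
  assumes "0 < a" "0 < b" "0 < r" "0 < \<alpha>" "\<alpha> < 1"
    and holder: "\<And>j k. bounded_holder_on \<alpha> (cball p r) (E j k)"
    and vanish: "\<And>j k. E j k p = 0"
    and extend: "\<And>j k x. x \<in> ball p r - {z. z $ 1 = 0} \<Longrightarrow> cone_sigma_coeff \<beta> a b H j k x = E j k x"
  shows "standard_cone_at \<beta> H p"
proof -
  define T where "T = ball p r - {z. z $ 1 = 0}"
  have T: "T \<subseteq> cball p r"
    unfolding T_def by auto
  obtain C where C: "\<And>jk x y. x \<in> cball p r \<Longrightarrow> y \<in> cball p r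
      \<Longrightarrow> norm (E (fst jk) (snd jk) x - E (fst jk) (snd jk) y) \<le> C * dist x y powr \<alpha>"
    using bounded_holder_on_uniform_constant[of \<alpha> "cball p r" "\<lambda>jk. E (fst jk) (snd jk)"]
      holder by blast
  have "(E j k \<longlongrightarrow> E j k p) (at p within cball p r)" for j k
    using bounded_holder_on_tendsto[OF holder assms(4)] assms(3) by simp
  then have "(E j k \<longlongrightarrow> 0) (at p within T)" for j k
    using tendsto_within_subset[OF _ T] vanish by metis
  moreover have "\<forall>\<^sub>F x in at p within T. E j k x = cone_sigma_coeff \<beta> a b H j k x" for j k
    using extend unfolding T_def by (auto simp: eventually_at_filter)
  ultimately have lim: "(cone_sigma_coeff \<beta> a b H j k \<longlongrightarrow> 0) (at p within T)" for j k
    using tendsto_cong by blast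
  have holderT: "cmod (cone_sigma_coeff \<beta> a b H j k x - cone_sigma_coeff \<beta> a b H j k y)
      \<le> C * dist x y powr \<alpha>"
    if "x \<in> T" "y \<in> T" for j k x y
  proof -
    have "x \<in> cball p r" "y \<in> cball p r"
      using that T by blast+
    from C[OF this, of "(j, k)"] have "norm (E j k x - E j k y) \<le> C * dist x y powr \<alpha>"
      by simp
    then show ?thesis
      using extend that unfolding T_def by simp
  qed
  then have "\<forall>j k. (\<forall>x\<in>T. \<forall>y\<in>T.
      cmod (cone_sigma_coeff \<beta> a b H j k x - cone_sigma_coeff \<beta> a b H j k y)
        \<le> C * dist x y powr \<alpha>)
      \<and> (cone_sigma_coeff \<beta> a b H j k \<longlongrightarrow> 0) (at p within T)"
    using lim by blast
  then show ?thesis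
    unfolding standard_cone_at_def T_def using assms(1-5) by blast
qed

lemma standard_cone_at_divisor_point:
  assumes "0 < \<beta>" "\<beta> < 1" "open S" "0 < r" "cball p r \<subseteq> S" "p $ 1 = 0"
    and \<eta>: "smooth_real_11_form_on S \<eta>" "0 < Re (\<eta> p $ 2 $ 2)"
    and F: "smooth_on S F" "0 < F p"
    and \<omega>: "\<forall>z\<in>S - {z. z $ 1 = 0}.
      \<omega> z = \<eta> z + ddbar_coeff (\<lambda>w. complex_of_real (F w * cmod (w $ 1) powr (2 * \<beta>))) z"
  shows "standard_cone_at \<beta> \<omega> p"
proof -
  define a where "a = F p powr (1 / (2 * \<beta>))"
  define b where "b = sqrt (Re (\<eta> p $ 2 $ 2))"
  define c where "c i = (if i = 1 then a powr \<beta> else b)" for i :: 2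
  define \<alpha> where "\<alpha> = min \<beta> (1 - \<beta>)"
  have a: "0 < a" "a powr \<beta> * a powr \<beta> = F p"
    using F(2) assms(1) by (simp_all add: a_def powr_powr flip: powr_add)
  have "p \<in> S"
    using assms(4,5) by auto
  then have "\<eta> p $ 2 $ 2 = cnj (\<eta> p $ 2 $ 2)"
    using \<eta>(1) unfolding smooth_real_11_form_on_def by blast
  then have b: "0 < b" "\<eta> p $ 2 $ 2 = complex_of_real (b * b)"
    using \<eta>(2) unfolding b_def by (simp_all add: complex_eq_iff)
  have c: "0 < c i" for i
    using a b by (simp add: c_def)
  have \<alpha>: "0 < \<alpha>" "\<alpha> < 1" "\<alpha> \<le> \<beta>" "\<alpha> \<le> 1 - \<beta>"
    using assms(1,2) by (auto simp: \<alpha>_def)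
  define E where "E j k x = weighted_potential_coeff \<beta> \<eta> F j k x / complex_of_real (c j * c k)
    - complex_of_real (if j \<noteq> k then 0 else if j = 1 then \<beta>\<^sup>2 else 1)" for j k x
  show ?thesis
  proof (rule standard_cone_atI[of a b r \<alpha> p E])
    fix j k
    show "bounded_holder_on \<alpha> (cball p r) (E j k)"
      using bounded_holder_on_weighted_potential_coeff[OF \<alpha>(1,3,4) assms(3) compact_cball
          convex_cball assms(5) \<eta>(1) F(1)]
      unfolding E_def[abs_def]
      by (intro bounded_holder_on_diff bounded_holder_on_divide_const bounded_holder_on_const)
    show "E j k p = 0"
      using c[of j] c[of k] a b exhaust_2[of j] exhaust_2[of k]
      by (auto simp: E_def weighted_potential_coeff_divisor[OF assms(6)] c_def a(2)[symmetric])
    fix x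
    assume "x \<in> ball p r - {z. z $ 1 = 0}"
    then have "x \<in> S" "x $ 1 \<noteq> 0"
      using assms(5) by auto
    then show "cone_sigma_coeff \<beta> a b \<omega> j k x = E j k x"
      using \<omega> weighted_potential_coeff_eq[OF assms(3) F(1), of x \<eta> \<beta> j k]
      by (simp add: E_def cone_sigma_coeff_eq[OF a(1)] c_def)
  qed (use a b \<alpha> assms(4) in auto)
qed

theorem lemma3p6:
  fixes \<beta> R :: real
    and \<omega> \<eta> :: "complex^2 \<Rightarrow> complex^2^2"
    and F :: "complex^2 \<Rightarrow> real"
  assumes "0 < \<beta>" "\<beta> < 1" "0 < R"
    and "smooth_kaehler_on (ball 0 R - {z. z $ 1 = 0}) \<omega>"
    and "smooth_real_11_form_on (ball 0 R) \<eta>"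
    and "\<forall>z\<in>ball 0 R. z $ 1 = 0 \<longrightarrow> Re (\<eta> z $ 2 $ 2) > 0"
    and "smooth_on (ball 0 R) F"
    and "\<forall>z\<in>ball 0 R. F z > 0"
    and "\<forall>z\<in>ball 0 R - {z. z $ 1 = 0}.
           \<omega> z = \<eta> z + ddbar_coeff (\<lambda>w. complex_of_real (F w * cmod (w $ 1) powr (2 * \<beta>))) z"
  shows "standard_cone_near \<beta> \<omega> 0"
  unfolding standard_cone_near_def
proof (intro exI[of _ "ball 0 R"] conjI ballI impI)
  fix p :: "complex^2"
  assume p: "p \<in> ball 0 R" "p $ 1 = 0"
  define r where "r = (R - norm p) / 2"
  have r: "0 < r"
    using p(1) by (simp add: r_def)
  have cball: "cball p r \<subseteq> ball 0 R"
  proof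
    fix x
    assume "x \<in> cball p r"
    then have "norm (x - p) \<le> r"
      by (simp add: dist_norm norm_minus_commute)
    then show "x \<in> ball 0 R"
      using norm_triangle_sub[of x p] p(1) by (simp add: r_def)
  qed
  show "standard_cone_at \<beta> \<omega> p"
    using assms(6,8) p
    by (intro standard_cone_at_divisor_point[OF assms(1,2) open_ball r cball p(2) assms(5) _
          assms(7) _ assms(9)]) auto
qed (use assms(3) in auto)

end
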